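(* Let $\pi\colon\mathcal{B}\to\mathcal{C}$ be a surjective open homomorphism of complete topological rings, let $I=\operatorname{Ker}(\pi)$ and let $\mathrm{e}\colon\mathcal{B}\to\mathcal{B}\{T\}$ be a restricted exponential homomorphism. Assume that $\mathrm{e}(I)\subseteq i_0(I)\mathcal{B}\{T\}$. Then there exists a unique restricted exponential homomorphism $\overline{\mathrm{e}}\colon\mathcal{C}\to\mathcal{C}\{T\}$ such that $\pi_T\circ\mathrm{e}=\overline{\mathrm{e}}\circ\pi$, where $\pi_T\colon\mathcal{B}\{T\}\to\mathcal{C}\{T\}$ is the unique homomorphism of topological $\mathcal{B}$-algebras mapping $T$ to $T$ (i.e. $\sum_ib_iT^i\mapsto\sum_i\pi(b_i)T^i$).
   Context: Conventions: topological rings are linearly topologized with a countable fundamental system of open ideals; homomorphisms are continuous; complete means the canonical map to $\varprojlim_{\mathfrak{a}}\mathcal{B}/\mathfrak{a}$ (open ideals, discrete quotients) is a topological isomorphism. For complete $\mathcal{B}$, $\mathcal{B}\{T\}$, $\mathcal{B}\{T,T'\}$ denote restricted power series (coefficients converging to $0$), topologized by the ideals of series with all coefficients in a given open ideal; $i_0\colon\mathcal{B}\to\mathcal{B}\{T\}$ is the inclusion as constant series, and $i_0(I)\mathcal{B}\{T\}$ is the ideal generated by the constant series in $I$. A restricted exponential homomorphism is a continuous ring homomorphism $\mathrm{e}\colon\mathcal{B}\to\mathcal{B}\{T\}$, $\mathrm{e}(b)=\sum_i\mathrm{e}_i(b)T^i$, with $\mathrm{e}_0=\mathrm{id}$ and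 $\sum_{i,j}\mathrm{e}_j(\mathrm{e}_i(b))T'^jT^i=\sum_\ell\mathrm{e}_\ell(b)(T+T')^\ell$ for all $b$. *)

theory Defs
  imports Main
begin

text \<open>A topological ring is a commutative ring (the whole type) together with a
  decreasing sequence N of ideals forming a countable fundamental system of open
  ideals; the open ideals are exactly the ideals containing some N n.\<close>

definition is_ideal :: "'a::comm_ring_1 set \<Rightarrow> bool" where
  "is_ideal I \<longleftrightarrow> 0 \<in> I \<and> (\<forall>x\<in>I. \<forall>y\<in>I. x + y \<in> I) \<and> (\<forall>x\<in>I. \<forall>r. r * x \<in> I)"

definition lin_top :: "(nat \<Rightarrow> 'a::comm_ring_1 set) \<Rightarrow> bool" where
  "lin_top N \<longleftrightarrow> (\<forall>n. is_ideal (N n)) \<and> (\<forall>n. N (Suc n) \<subseteq> N n)"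

text \<open>Complete: the canonical map to the inverse limit of the discrete quotients
  B/N n is bijective (this limit is cofinal in the limit over all open ideals;
  the inverse map is then automatically continuous).  Injective = separated,
  surjective = every compatible system of residues has a lift.\<close>

definition complete_lt :: "(nat \<Rightarrow> 'a::comm_ring_1 set) \<Rightarrow> bool" where
  "complete_lt N \<longleftrightarrow> (\<Inter>n. N n) = {0} \<and>
     (\<forall>x::nat \<Rightarrow> 'a. (\<forall>n. x (Suc n) - x n \<in> N n) \<longrightarrow> (\<exists>b. \<forall>n. b - x n \<in> N n))"

definition ring_hom_t :: "('a::comm_ring_1 \<Rightarrow> 'b::comm_ring_1) \<Rightarrow> bool" where
  "ring_hom_t f \<longleftrightarrow> f 1 = 1 \<and> (\<forall>x y. f (x + y) = f x + f y) \<and> (\<forall>x y. f (x * y) = f x * f y)"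

definition cont_hom :: "(nat \<Rightarrow> 'a::comm_ring_1 set) \<Rightarrow> (nat \<Rightarrow> 'b::comm_ring_1 set) \<Rightarrow> ('a \<Rightarrow> 'b) \<Rightarrow> bool" where
  "cont_hom N M f \<longleftrightarrow> ring_hom_t f \<and> (\<forall>n. \<exists>m. f ` N m \<subseteq> M n)"

definition open_map_t :: "(nat \<Rightarrow> 'a::comm_ring_1 set) \<Rightarrow> (nat \<Rightarrow> 'b::comm_ring_1 set) \<Rightarrow> ('a \<Rightarrow> 'b) \<Rightarrow> bool" where
  "open_map_t N M f \<longleftrightarrow> (\<forall>n. \<exists>m. M m \<subseteq> f ` N n)"

text \<open>Power series in T are coefficient sequences; restricted = coefficients tend to 0.\<close>
definition rps :: "(nat \<Rightarrow> 'a::comm_ring_1 set) \<Rightarrow> (nat \<Rightarrow> 'a) \<Rightarrow> bool" where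
  "rps N a \<longleftrightarrow> (\<forall>n. \<forall>\<^sub>F i in sequentially. a i \<in> N n)"

definition ps_const :: "'a::comm_ring_1 \<Rightarrow> nat \<Rightarrow> 'a" where
  "ps_const c = (\<lambda>i. if i = 0 then c else 0)"

definition ps_add :: "(nat \<Rightarrow> 'a::comm_ring_1) \<Rightarrow> (nat \<Rightarrow> 'a) \<Rightarrow> nat \<Rightarrow> 'a" where
  "ps_add a b = (\<lambda>i. a i + b i)"

definition ps_mult :: "(nat \<Rightarrow> 'a::comm_ring_1) \<Rightarrow> (nat \<Rightarrow> 'a) \<Rightarrow> nat \<Rightarrow> 'a" where
  "ps_mult a b = (\<lambda>k. \<Sum>i\<le>k. a i * b (k - i))"

text \<open>Restricted exponential homomorphism, e b i = e_i(b).  The identity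
  sum_{i,j} e_j(e_i b) T'^j T^i = sum_l e_l(b) (T+T')^l in B{T,T'} is written
  coefficientwise: the coefficient of T^i T'^j on the right is (i+j choose i) e_{i+j}(b).\<close>
definition restricted_exp :: "(nat \<Rightarrow> 'a::comm_ring_1 set) \<Rightarrow> ('a \<Rightarrow> nat \<Rightarrow> 'a) \<Rightarrow> bool" where
  "restricted_exp N e \<longleftrightarrow>
     (\<forall>b. rps N (e b)) \<and>
     e 1 = ps_const 1 \<and>
     (\<forall>x y. e (x + y) = ps_add (e x) (e y)) \<and>
     (\<forall>x y. e (x * y) = ps_mult (e x) (e y)) \<and>
     (\<forall>n. \<exists>m. \<forall>b\<in>N m. \<forall>i. e b i \<in> N n) \<and>
     (\<forall>b. e b 0 = b) \<and>
     (\<forall>b i j. e (e b i) j = of_nat ((i + j) choose i) * e b (i + j))"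

definition const_ideal :: "(nat \<Rightarrow> 'a::comm_ring_1 set) \<Rightarrow> 'a set \<Rightarrow> (nat \<Rightarrow> 'a) set" where
  "const_ideal N I = {a. \<exists>(m::nat) c f. (\<forall>k<m. c k \<in> I \<and> rps N (f k)) \<and>
                                a = (\<lambda>i. \<Sum>k<m. c k * f k i)}"

end

theory Submission
  imports Defs
begin

text \<open>As \<pi> is surjective and \<pi>_T acts coefficientwise, the identity
  \<pi>_T \<circ> e = e' \<circ> \<pi> determines e' uniquely, and e' is well defined because
  e maps the kernel I into i_0(I)B{T}, whose series have all coefficients in I.
  Every axiom of a restricted exponential homomorphism for e' is the image
  under \<pi> of the same axiom for e; openness of \<pi> transports the uniform
  continuity of the e_i.\<close>

lemma ring_hom_t_zero:
  assumes "ring_hom_t f"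
  shows "f 0 = 0"
  using assms unfolding ring_hom_t_def by (metis add_cancel_right_right add_0)

lemma ring_hom_t_diff:
  assumes "ring_hom_t f"
  shows "f (x - y) = f x - f y"
  using assms unfolding ring_hom_t_def by (metis add_diff_cancel diff_add_cancel)

lemma ring_hom_t_sum:
  assumes "ring_hom_t f"
  shows "f (sum g A) = (\<Sum>a\<in>A. f (g a))"
  using assms
  by (induction A rule: infinite_finite_induct) (auto simp: ring_hom_t_zero ring_hom_t_def)

lemma ring_hom_t_of_nat:
  assumes "ring_hom_t f"
  shows "f (of_nat n) = of_nat n"
  using assms by (induction n) (auto simp: ring_hom_t_zero ring_hom_t_def)

lemma restricted_exp_diff:
  assumes "restricted_exp N e"
  shows "e (x - y) i = e x i - e y i"
proof -
  have "e x = ps_add (e (x - y)) (e y)"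
    using assms unfolding restricted_exp_def by (metis diff_add_cancel)
  then show ?thesis by (simp add: ps_add_def fun_eq_iff algebra_simps)
qed

lemma ring_hom_t_const_ideal_coeff:
  assumes "ring_hom_t f" and "\<forall>x\<in>I. f x = 0" and "a \<in> const_ideal N I"
  shows "f (a i) = 0"
proof -
  obtain m :: nat and c g where c: "\<forall>k<m. c k \<in> I" and a: "a = (\<lambda>i. \<Sum>k<m. c k * g k i)"
    using assms(3) unfolding const_ideal_def by blast
  have "f (a i) = (\<Sum>k<m. f (c k) * f (g k i))"
    using assms(1) by (simp add: a ring_hom_t_sum ring_hom_t_def)
  also have "\<dots> = 0"
    using c assms(2) by simp
  finally show ?thesis .
qed

lemma restricted_exp_coeff_respects_kernel:
  assumes "ring_hom_t \<pi>" and "restricted_exp N e"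
    and "\<forall>b. \<pi> b = 0 \<longrightarrow> e b \<in> const_ideal N {b. \<pi> b = 0}"
    and "\<pi> b = \<pi> b'"
  shows "\<pi> (e b i) = \<pi> (e b' i)"
proof -
  have "\<pi> (b - b') = 0"
    using assms(1,4) by (simp add: ring_hom_t_diff)
  then have "\<pi> (e (b - b') i) = 0"
    using assms(3) by (intro ring_hom_t_const_ideal_coeff[OF assms(1), where I = "{b. \<pi> b = 0}" and N = N]) auto
  then show ?thesis
    using assms(1,2) by (simp add: restricted_exp_diff ring_hom_t_diff)
qed

lemma surj_factor_unique:
  assumes "surj f" and "\<And>x y. f x = f y \<Longrightarrow> g x = g y"
  shows "\<exists>!h. \<forall>x. h (f x) = g x"
proof (rule ex1I)
  show "\<forall>x. (g \<circ> inv f) (f x) = g x"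
    using assms(2)[of "inv f (f _)"] surj_f_inv_f[OF assms(1)] by simp
next
  fix h assume h: "\<forall>x. h (f x) = g x"
  show "h = g \<circ> inv f"
  proof
    fix c
    have "h c = h (f (inv f c))"
      using surj_f_inv_f[OF assms(1)] by simp
    then show "h c = (g \<circ> inv f) c"
      using h by simp
  qed
qed

lemma rps_image:
  assumes "cont_hom N M f" and "rps N a"
  shows "rps M (\<lambda>i. f (a i))"
  unfolding rps_def
proof
  fix n
  obtain m where m: "f ` N m \<subseteq> M n"
    using assms(1) unfolding cont_hom_def by blast
  have "\<forall>\<^sub>F i in sequentially. a i \<in> N m"
    using assms(2) unfolding rps_def by blast
  then show "\<forall>\<^sub>F i in sequentially. f (a i) \<in> M n"
    by eventually_elim (use m in blast)
qed

lemma open_map_transports_equicontinuity: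
  assumes "cont_hom NB NC \<pi>" and "open_map_t NB NC \<pi>"
    and "\<forall>n. \<exists>m. \<forall>b\<in>NB m. \<forall>i. e b i \<in> NB n"
    and "\<And>b. e' (\<pi> b) = (\<lambda>i. \<pi> (e b i))"
  shows "\<forall>n. \<exists>m. \<forall>c\<in>NC m. \<forall>i. e' c i \<in> NC n"
proof
  fix n
  obtain m1 where m1: "\<pi> ` NB m1 \<subseteq> NC n"
    using assms(1) unfolding cont_hom_def by blast
  obtain m2 where m2: "\<forall>b\<in>NB m2. \<forall>i. e b i \<in> NB m1"
    using assms(3) by blast
  obtain m3 where m3: "NC m3 \<subseteq> \<pi> ` NB m2"
    using assms(2) unfolding open_map_t_def by blast
  have "e' c i \<in> NC n" if "c \<in> NC m3" for c i
    using that m1 m2 m3 assms(4) by fastforce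
  then show "\<exists>m. \<forall>c\<in>NC m. \<forall>i. e' c i \<in> NC n"
    by blast
qed

lemma restricted_exp_descends:
  assumes \<pi>: "cont_hom NB NC \<pi>" "surj \<pi>" "open_map_t NB NC \<pi>"
    and e: "restricted_exp NB e"
    and e': "\<And>b. e' (\<pi> b) = (\<lambda>i. \<pi> (e b i))"
  shows "restricted_exp NC e'"
proof -
  have \<pi>_one: "\<pi> 1 = 1" and \<pi>_add: "\<And>x y. \<pi> (x + y) = \<pi> x + \<pi> y"
    and \<pi>_mult: "\<And>x y. \<pi> (x * y) = \<pi> x * \<pi> y"
    using \<pi>(1) unfolding cont_hom_def ring_hom_t_def by blast+
  have hom: "ring_hom_t \<pi>"
    using \<pi>(1) unfolding cont_hom_def by blast
  have e_rps: "\<And>b. rps NB (e b)" and e_one: "e 1 = ps_const 1"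
    and e_add: "\<And>x y. e (x + y) = ps_add (e x) (e y)"
    and e_mult: "\<And>x y. e (x * y) = ps_mult (e x) (e y)"
    and e_cont: "\<forall>n. \<exists>m. \<forall>b\<in>NB m. \<forall>i. e b i \<in> NB n"
    and e_0: "\<And>b. e b 0 = b"
    and e_comp: "\<And>b i j. e (e b i) j = of_nat ((i + j) choose i) * e b (i + j)"
    using e unfolding restricted_exp_def by blast+
  have lift: "\<exists>b. c = \<pi> b" for c
    using \<pi>(2) by auto
  have "rps NC (e' c)" for c
    using lift[of c] e_rps rps_image[OF \<pi>(1)] by (auto simp: e')
  moreover have "e' 1 = ps_const 1"
    using e'[of 1] by (simp add: e_one \<pi>_one ps_const_def ring_hom_t_zero[OF hom] fun_eq_iff)
  moreover have "e' (x + y) = ps_add (e' x) (e' y)" for x y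
  proof -
    obtain a b where "x = \<pi> a" "y = \<pi> b"
      using lift by blast
    then show ?thesis
      using e'[of "a + b"] by (simp add: \<pi>_add [symmetric] e' e_add ps_add_def)
  qed
  moreover have "e' (x * y) = ps_mult (e' x) (e' y)" for x y
  proof -
    obtain a b where "x = \<pi> a" "y = \<pi> b"
      using lift by blast
    then show ?thesis
      using e'[of "a * b"]
      by (simp add: \<pi>_mult [symmetric] e' e_mult ps_mult_def ring_hom_t_sum[OF hom])
  qed
  moreover have "\<forall>n. \<exists>m. \<forall>c\<in>NC m. \<forall>i. e' c i \<in> NC n"
    using open_map_transports_equicontinuity[OF \<pi>(1,3)] e_cont e' by blast
  moreover have "e' c 0 = c" for c
    using lift[of c] by (auto simp: e' e_0)
  moreover have "e' (e' c i) j = of_nat ((i + j) choose i) * e' c (i + j)" for c i j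
  proof -
    obtain b where c: "c = \<pi> b"
      using lift by blast
    have "e' (e' c i) j = \<pi> (e (e b i) j)"
      by (simp add: c e')
    also have "\<dots> = of_nat ((i + j) choose i) * \<pi> (e b (i + j))"
      by (simp add: e_comp \<pi>_mult ring_hom_t_of_nat[OF hom])
    finally show ?thesis
      by (simp add: c e')
  qed
  ultimately show ?thesis
    unfolding restricted_exp_def by blast
qed

theorem proposition2p7:
  fixes \<pi> :: "'b::comm_ring_1 \<Rightarrow> 'c::comm_ring_1"
    and NB :: "nat \<Rightarrow> 'b set" and NC :: "nat \<Rightarrow> 'c set"
    and e :: "'b \<Rightarrow> nat \<Rightarrow> 'b"
  assumes "lin_top NB" and "lin_top NC"
    and "complete_lt NB" and "complete_lt NC"
    and "cont_hom NB NC \<pi>" and "surj \<pi>" and "open_map_t NB NC \<pi>"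
    and "restricted_exp NB e"
    and "\<forall>b. \<pi> b = 0 \<longrightarrow> e b \<in> const_ideal NB {b. \<pi> b = 0}"
  shows "\<exists>!ee. restricted_exp NC ee \<and> (\<forall>b. (\<lambda>i. \<pi> (e b i)) = ee (\<pi> b))"
proof -
  have hom: "ring_hom_t \<pi>"
    using assms(5) unfolding cont_hom_def by blast
  have "\<exists>!ee. \<forall>b. ee (\<pi> b) = (\<lambda>i. \<pi> (e b i))"
  proof (rule surj_factor_unique[OF assms(6)])
    fix b b' assume "\<pi> b = \<pi> b'"
    then show "(\<lambda>i. \<pi> (e b i)) = (\<lambda>i. \<pi> (e b' i))"
      using restricted_exp_coeff_respects_kernel[OF hom assms(8,9)] by blast
  qed
  then obtain ee where ee: "\<And>b. ee (\<pi> b) = (\<lambda>i. \<pi> (e b i))"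
    and unique: "\<And>ee'. \<forall>b. ee' (\<pi> b) = (\<lambda>i. \<pi> (e b i)) \<Longrightarrow> ee' = ee"
    by blast
  show ?thesis
  proof (rule ex1I[of _ ee])
    show "restricted_exp NC ee \<and> (\<forall>b. (\<lambda>i. \<pi> (e b i)) = ee (\<pi> b))"
      using restricted_exp_descends[OF assms(5-8) ee] ee by metis
  next
    fix ee' assume "restricted_exp NC ee' \<and> (\<forall>b. (\<lambda>i. \<pi> (e b i)) = ee' (\<pi> b))"
    then show "ee' = ee"
      using unique by metis
  qed
qed

end
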